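(* Let $S=K[x_1,\ldots,x_n]$. If $I$ is an $f$-ideal of $S$ of degree $2$, then $I$ is of $l$ type for some $1\le l\le\lfloor n/2\rfloor$ if and only if the complement graph $\overline{\tau(G(I))}$ is bipartite.
   Context: $K$ is a field; $G(I)$ is the minimal monomial generating set of $I$; "of degree $2$" means all elements of $G(I)$ have degree $2$. With $\sigma$ the bijection $x_{i_1}\cdots x_{i_k}\mapsto\{i_1,\ldots,i_k\}$, the facet complex $\delta_{\mathcal{F}}(I)$ has facets $\sigma(g)$, $g\in G(I)$, the Stanley–Reisner complex is $\delta_{\mathcal{N}}(I)=\{\sigma(g)\mid g \text{ square-free monomial},\ g\notin I\}$, and $I$ is an $f$-ideal if both complexes have the same $f$-vector. For a nonempty proper subset $B\subset[n]$ with complement $\overline B$, $W_B=\{x_ix_j\mid i,j\in B \text{ or } i,j\in\overline B,\ i\neq j\}$. A set $A$ of square-free monomials of degree 2 satisfies $l^{th}$ TPCS if $W_B\subseteq A$ for some $B\subseteq[n]$ with $|B|=l$; an $f$-ideal $I$ is of $l$ type if $G(I)$ satisfies $l^{th}$ TPCS. For $A$ a set of degree-2 square-free monomials, $\tau(A)$ is the graph on vertices $v_1,\ldots,v_n$ with $v_iv_j$ an edge iff $x_ix_j\in A$. *)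

theory Defs
  imports Main
begin

text \<open>Monomials of S = K[x_1,...,x_n] are represented by exponent vectors
  supported on {1..n}. A monomial ideal is represented by the set of monomials
  it contains (it is spanned over K by them, so this determines it).
  The field K plays no role in these combinatorial notions.\<close>

type_synonym monomial = "nat \<Rightarrow> nat"

definition monomials :: "nat \<Rightarrow> monomial set" where
  "monomials n = {m. \<forall>i. m i \<noteq> 0 \<longrightarrow> i \<in> {1..n}}"

definition mdvd :: "monomial \<Rightarrow> monomial \<Rightarrow> bool" where
  "mdvd m m' \<longleftrightarrow> (\<forall>i. m i \<le> m' i)"

definition monomial_ideal :: "nat \<Rightarrow> monomial set \<Rightarrow> bool" where
  "monomial_ideal n I \<longleftrightarrow> I \<subseteq> monomials n \<and>
     (\<forall>m\<in>I. \<forall>m'\<in>monomials n. mdvd m m' \<longrightarrow> m' \<in> I)"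

definition mingens :: "monomial set \<Rightarrow> monomial set" where
  "mingens I = {m\<in>I. \<forall>m'\<in>I. mdvd m' m \<longrightarrow> m' = m}"

definition mdeg :: "nat \<Rightarrow> monomial \<Rightarrow> nat" where
  "mdeg n m = (\<Sum>i=1..n. m i)"

definition squarefree_mon :: "monomial \<Rightarrow> bool" where
  "squarefree_mon m \<longleftrightarrow> (\<forall>i. m i \<le> 1)"

definition sigma :: "monomial \<Rightarrow> nat set" where
  "sigma m = {i. m i \<noteq> 0}"

definition facet_complex :: "monomial set \<Rightarrow> nat set set" where
  "facet_complex I = {F. \<exists>g\<in>mingens I. F \<subseteq> sigma g}"

definition SR_complex :: "nat \<Rightarrow> monomial set \<Rightarrow> nat set set" where
  "SR_complex n I = {sigma g | g. g \<in> monomials n \<and> squarefree_mon g \<and> g \<notin> I}"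

text \<open>f-vector: f_{k-1} is the number of faces of cardinality k.\<close>
definition fvec :: "nat set set \<Rightarrow> nat \<Rightarrow> nat" where
  "fvec \<Delta> k = card {F\<in>\<Delta>. card F = k}"

definition f_ideal :: "nat \<Rightarrow> monomial set \<Rightarrow> bool" where
  "f_ideal n I \<longleftrightarrow> monomial_ideal n I \<and> (\<forall>g\<in>mingens I. squarefree_mon g) \<and>
     fvec (facet_complex I) = fvec (SR_complex n I)"

definition of_degree :: "nat \<Rightarrow> nat \<Rightarrow> monomial set \<Rightarrow> bool" where
  "of_degree n d I \<longleftrightarrow> (\<forall>g\<in>mingens I. mdeg n g = d)"

definition xx :: "nat \<Rightarrow> nat \<Rightarrow> monomial" where
  "xx i j = (\<lambda>k. if k = i \<or> k = j then 1 else 0)"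

definition W :: "nat \<Rightarrow> nat set \<Rightarrow> monomial set" where
  "W n B = {xx i j | i j. i \<noteq> j \<and>
      ((i \<in> B \<and> j \<in> B) \<or> (i \<in> {1..n} - B \<and> j \<in> {1..n} - B))}"

definition TPCS :: "nat \<Rightarrow> nat \<Rightarrow> monomial set \<Rightarrow> bool" where
  "TPCS n l A \<longleftrightarrow> (\<exists>B. B \<subseteq> {1..n} \<and> B \<noteq> {} \<and> B \<noteq> {1..n} \<and> card B = l \<and> W n B \<subseteq> A)"

definition l_type :: "nat \<Rightarrow> nat \<Rightarrow> monomial set \<Rightarrow> bool" where
  "l_type n l I \<longleftrightarrow> f_ideal n I \<and> TPCS n l (mingens I)"

definition tau_edge :: "monomial set \<Rightarrow> nat \<Rightarrow> nat \<Rightarrow> bool" where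
  "tau_edge A i j \<longleftrightarrow> i \<noteq> j \<and> xx i j \<in> A"

definition compl_edge :: "monomial set \<Rightarrow> nat \<Rightarrow> nat \<Rightarrow> bool" where
  "compl_edge A i j \<longleftrightarrow> i \<noteq> j \<and> \<not> tau_edge A i j"

definition bipartite :: "nat set \<Rightarrow> (nat \<Rightarrow> nat \<Rightarrow> bool) \<Rightarrow> bool" where
  "bipartite V E \<longleftrightarrow> (\<exists>X\<subseteq>V. \<forall>u\<in>V. \<forall>v\<in>V. E u v \<longrightarrow> (u \<in> X \<longleftrightarrow> v \<notin> X))"

end

theory Submission
  imports Defs
begin

text \<open>For B \<subseteq> [n], W_B \<subseteq> G(I) says exactly that every edge of the complement of
  \<tau>(G(I)) joins B to its complement, i.e. that (B, [n] - B) is a bipartition of it.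
  The only subtlety is that B must be a proper nonempty subset: B = \<emptyset> would put every
  x_i x_j into G(I), and comparing the f-vectors in dimension 1 (or, for n < 2, in
  dimension -1) shows that an f-ideal of degree 2 cannot do that. Finally B or its
  complement has at most n/2 elements, and W_B = W_{[n] - B}.\<close>

lemma sigma_subset_atLeastAtMost: "g \<in> monomials n \<Longrightarrow> sigma g \<subseteq> {1..n}"
  by (auto simp: monomials_def sigma_def)

lemma mingens_subset: "mingens I \<subseteq> I"
  by (auto simp: mingens_def)

lemma sigma_xx [simp]: "sigma (xx i j) = {i, j}"
  by (auto simp: sigma_def xx_def)

lemma squarefree_mon_xx: "squarefree_mon (xx i j)"
  by (simp add: squarefree_mon_def xx_def)

lemma squarefree_mon_eqI:
  assumes "squarefree_mon m" "squarefree_mon m'" "sigma m = sigma m'"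
  shows "m = m'"
proof
  fix k
  have "m k \<le> 1" "m' k \<le> 1" "m k \<noteq> 0 \<longleftrightarrow> m' k \<noteq> 0"
    using assms by (auto simp: squarefree_mon_def sigma_def set_eq_iff)
  then show "m k = m' k" by linarith
qed

lemma mdeg_squarefree_le: "squarefree_mon m \<Longrightarrow> mdeg n m \<le> n"
  using sum_mono[of "{1..n}" m "\<lambda>_. 1"] by (simp add: mdeg_def squarefree_mon_def)

lemma facet_complex_subset_Pow:
  "I \<subseteq> monomials n \<Longrightarrow> facet_complex I \<subseteq> Pow {1..n}"
  using mingens_subset sigma_subset_atLeastAtMost by (fastforce simp: facet_complex_def)

lemma SR_complex_subset_Pow: "SR_complex n I \<subseteq> Pow {1..n}"
  using sigma_subset_atLeastAtMost by (auto simp: SR_complex_def)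

lemma fvec_pos_iff:
  assumes "\<Delta> \<subseteq> Pow V" "finite V"
  shows "0 < fvec \<Delta> k \<longleftrightarrow> (\<exists>F\<in>\<Delta>. card F = k)"
proof -
  have "finite {F \<in> \<Delta>. card F = k}"
    using assms by (auto intro: finite_subset[of _ "Pow V"])
  then show ?thesis by (auto simp: fvec_def card_gt_0_iff)
qed

text \<open>The empty face: the unit monomial lies outside I, since otherwise it would be
  a (minimal) generator.\<close>
lemma f_ideal_mingens_nonempty:
  assumes "f_ideal n I"
  shows "mingens I \<noteq> {}"
proof
  assume empty: "mingens I = {}"
  have one_notin: "(\<lambda>_. 0) \<notin> I"
  proof
    assume "(\<lambda>_. 0) \<in> I"
    then have "(\<lambda>_. 0) \<in> mingens I"
      by (auto simp: mingens_def mdvd_def fun_eq_iff)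
    with empty show False by simp
  qed
  have "{} \<in> SR_complex n I"
    unfolding SR_complex_def
    using one_notin by (auto simp: monomials_def squarefree_mon_def sigma_def intro!: exI[of _ "\<lambda>_. 0"])
  then have "0 < fvec (SR_complex n I) 0"
    by (subst fvec_pos_iff[OF SR_complex_subset_Pow]) (auto intro!: bexI[of _ "{}"])
  moreover have "fvec (facet_complex I) 0 = 0"
    using empty by (simp add: facet_complex_def fvec_def)
  ultimately show False
    using assms by (simp add: f_ideal_def)
qed

lemma SR_complex_no_edges:
  assumes "\<forall>i\<in>{1..n}. \<forall>j\<in>{1..n}. i \<noteq> j \<longrightarrow> xx i j \<in> I"
  shows "\<not> (\<exists>F\<in>SR_complex n I. card F = 2)"
proof
  assume "\<exists>F\<in>SR_complex n I. card F = 2"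
  then obtain g where g: "g \<in> monomials n" "squarefree_mon g" "g \<notin> I" "card (sigma g) = 2"
    by (auto simp: SR_complex_def)
  then obtain i j where ij: "i \<noteq> j" "sigma g = {i, j}"
    by (meson card_2_iff)
  have "g = xx i j"
    using g(2) ij(2) by (simp add: squarefree_mon_eqI squarefree_mon_xx)
  moreover have "i \<in> {1..n}" "j \<in> {1..n}"
    using sigma_subset_atLeastAtMost[OF g(1)] ij(2) by auto
  ultimately show False
    using assms ij(1) g(3) by blast
qed

lemma f_ideal_deg2_not_all_edges:
  assumes f: "f_ideal n I" and deg: "of_degree n 2 I"
  shows "\<not> (\<forall>i\<in>{1..n}. \<forall>j\<in>{1..n}. i \<noteq> j \<longrightarrow> xx i j \<in> mingens I)"
proof
  assume all: "\<forall>i\<in>{1..n}. \<forall>j\<in>{1..n}. i \<noteq> j \<longrightarrow> xx i j \<in> mingens I"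
  have mon: "I \<subseteq> monomials n"
    using f by (simp add: f_ideal_def monomial_ideal_def)
  obtain g where "g \<in> mingens I"
    using f_ideal_mingens_nonempty[OF f] by blast
  then have "mdeg n g = 2" "squarefree_mon g"
    using f deg by (auto simp: f_ideal_def of_degree_def)
  then have "2 \<le> n"
    using mdeg_squarefree_le by metis
  with all have "{1, 2} \<in> facet_complex I"
    by (auto simp: facet_complex_def intro!: bexI[of _ "xx 1 2"])
  then have "0 < fvec (facet_complex I) 2"
    by (subst fvec_pos_iff[OF facet_complex_subset_Pow[OF mon]]) (auto intro!: bexI[of _ "{1, 2}"])
  moreover have "\<not> 0 < fvec (SR_complex n I) 2"
    using SR_complex_no_edges[of n I] all mingens_subset
    by (subst fvec_pos_iff[OF SR_complex_subset_Pow]) blast+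
  ultimately show False
    using f by (simp add: f_ideal_def)
qed

lemma W_subset_iff_bipartition:
  assumes "B \<subseteq> {1..n}"
  shows "W n B \<subseteq> A \<longleftrightarrow>
    (\<forall>u\<in>{1..n}. \<forall>v\<in>{1..n}. compl_edge A u v \<longrightarrow> (u \<in> B \<longleftrightarrow> v \<notin> B))"
proof
  assume "W n B \<subseteq> A"
  then show "\<forall>u\<in>{1..n}. \<forall>v\<in>{1..n}. compl_edge A u v \<longrightarrow> (u \<in> B \<longleftrightarrow> v \<notin> B)"
    unfolding W_def compl_edge_def tau_edge_def by blast
next
  assume "\<forall>u\<in>{1..n}. \<forall>v\<in>{1..n}. compl_edge A u v \<longrightarrow> (u \<in> B \<longleftrightarrow> v \<notin> B)"
  then show "W n B \<subseteq> A"
    using assms unfolding W_def compl_edge_def tau_edge_def by blast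
qed

lemma W_Diff: "B \<subseteq> {1..n} \<Longrightarrow> W n ({1..n} - B) = W n B"
  unfolding W_def by (auto simp: Diff_Diff_Int Int_absorb1)

lemma W_empty: "W n {} = {xx i j | i j. i \<noteq> j \<and> i \<in> {1..n} \<and> j \<in> {1..n}}"
  by (auto simp: W_def)

lemma TPCS_half:
  assumes "B \<subseteq> {1..n}" "B \<noteq> {}" "B \<noteq> {1..n}" "W n B \<subseteq> A"
  shows "\<exists>l. 1 \<le> l \<and> l \<le> n div 2 \<and> TPCS n l A"
proof -
  have TPCS_card: "TPCS n (card C) A"
    if "C \<subseteq> {1..n}" "C \<noteq> {}" "C \<noteq> {1..n}" "W n C \<subseteq> A" for C
    using that by (auto simp: TPCS_def)
  have pos: "1 \<le> card C" if "C \<subseteq> {1..n}" "C \<noteq> {}" for C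
    using that by (simp add: Suc_leI card_gt_0_iff finite_subset)
  have card_Diff: "card ({1..n} - B) = n - card B"
    using assms(1) by (simp add: card_Diff_subset finite_subset)
  show ?thesis
  proof (cases "card B \<le> n div 2")
    case True
    then show ?thesis
      using assms TPCS_card pos by blast
  next
    case False
    moreover have "card B \<le> n"
      using card_mono[OF _ assms(1)] by simp
    ultimately have "card ({1..n} - B) \<le> n div 2"
      using card_Diff by linarith
    moreover have "{1..n} - B \<subseteq> {1..n}" "{1..n} - B \<noteq> {}" "{1..n} - B \<noteq> {1..n}"
      using assms(1-3) by auto
    ultimately show ?thesis
      using TPCS_card pos assms(4) W_Diff[OF assms(1)] by metis
  qed
qed

theorem proposition4p4:
  fixes n :: nat and I :: "monomial set"
  assumes "f_ideal n I" and "of_degree n 2 I"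
  shows "(\<exists>l. 1 \<le> l \<and> l \<le> n div 2 \<and> l_type n l I) \<longleftrightarrow>
         bipartite {1..n} (compl_edge (mingens I))"
proof
  assume "\<exists>l. 1 \<le> l \<and> l \<le> n div 2 \<and> l_type n l I"
  then obtain B where B: "B \<subseteq> {1..n}" "W n B \<subseteq> mingens I"
    by (auto simp: l_type_def TPCS_def)
  then show "bipartite {1..n} (compl_edge (mingens I))"
    unfolding bipartite_def W_subset_iff_bipartition[OF B(1)] by blast
next
  assume "bipartite {1..n} (compl_edge (mingens I))"
  then obtain X where X: "X \<subseteq> {1..n}"
    and "\<forall>u\<in>{1..n}. \<forall>v\<in>{1..n}. compl_edge (mingens I) u v \<longrightarrow> (u \<in> X \<longleftrightarrow> v \<notin> X)"
    unfolding bipartite_def by blast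
  then have WX: "W n X \<subseteq> mingens I"
    by (simp add: W_subset_iff_bipartition)
  have "\<not> W n {} \<subseteq> mingens I"
    using f_ideal_deg2_not_all_edges[OF assms] unfolding W_empty by blast
  then have "X \<noteq> {}" "X \<noteq> {1..n}"
    using WX W_Diff[of "{}" n] by auto
  then show "\<exists>l. 1 \<le> l \<and> l \<le> n div 2 \<and> l_type n l I"
    using TPCS_half[OF X _ _ WX] assms(1) by (simp add: l_type_def)
qed

end
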